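(* Let $G=(V,E)$ be a graph and let $U,U^*\subseteq V$ be dominating sets of $G$. For every vertex $v\in V\setminus(U\cup U^* )$ choose a neighbour $u_v\in U$ of $v$. Let $\tilde G$ be the graph obtained from $G$ by contracting the edges $vu_v$ for all $v\in V\setminus(U\cup U^* )$; explicitly, $V(\tilde G)=U\cup U^*$, where each $x\in U$ represents the set $B_x=\{x\}\cup\{v\in V\setminus(U\cup U^* ): u_v=x\}$ and each $x\in U^*\setminus U$ represents $B_x=\{x\}$, and two distinct vertices $x,y$ of $\tilde G$ are adjacent iff $G$ has an edge between $B_x$ and $B_y$. Let $\{S_1,\dots,S_k\}$ be any division of $\tilde G$. Then for every $i\in\{1,\dots,k\}$, the set $(U\setminus\mathrm{int}(S_i))\cup(U^*\cap S_i)$ is a dominating set of $G$.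
   Context: A dominating set of $G$ is a set $D\subseteq V$ such that every vertex of $G$ is in $D$ or has a neighbour in $D$. For a collection $\mathcal S=\{S_1,\dots,S_k\}$ of subsets of the vertex set of a graph $H$, the boundary of $S_i$ is $\partial S_i=S_i\cap\bigcup_{j\ne i}S_j$ and its interior is $\mathrm{int}(S_i)=S_i\setminus\partial S_i$. A division of $H$ is a collection $\{S_1,\dots,S_k\}$ of subsets of $V(H)$ such that (a) every vertex and every edge of $H$ belongs to some induced subgraph $H[S_i]$, and (b) for every $i$ and every $v\in\mathrm{int}(S_i)$, all neighbours of $v$ in $H$ lie in $S_i$. *)

theory Defs
  imports Main
begin

definition graph :: "'a set \<Rightarrow> ('a \<Rightarrow> 'a \<Rightarrow> bool) \<Rightarrow> bool" where
  "graph V E \<longleftrightarrow> finite V \<and> (\<forall>x y. E x y \<longrightarrow> x \<in> V \<and> y \<in> V)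
     \<and> (\<forall>x y. E x y \<longrightarrow> E y x) \<and> (\<forall>x. \<not> E x x)"

definition dominating :: "'a set \<Rightarrow> ('a \<Rightarrow> 'a \<Rightarrow> bool) \<Rightarrow> 'a set \<Rightarrow> bool" where
  "dominating V E D \<longleftrightarrow> D \<subseteq> V \<and> (\<forall>v\<in>V. v \<in> D \<or> (\<exists>u\<in>D. E v u))"

definition boundary :: "'a set set \<Rightarrow> 'a set \<Rightarrow> 'a set" where
  "boundary SS S = S \<inter> \<Union>(SS - {S})"

definition interior :: "'a set set \<Rightarrow> 'a set \<Rightarrow> 'a set" where
  "interior SS S = S - boundary SS S"

definition division :: "'a set \<Rightarrow> ('a \<Rightarrow> 'a \<Rightarrow> bool) \<Rightarrow> 'a set set \<Rightarrow> bool" where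
  "division W F SS \<longleftrightarrow> finite SS \<and> (\<forall>S\<in>SS. S \<subseteq> W)
     \<and> (\<forall>v\<in>W. \<exists>S\<in>SS. v \<in> S)
     \<and> (\<forall>x y. F x y \<longrightarrow> (\<exists>S\<in>SS. x \<in> S \<and> y \<in> S))
     \<and> (\<forall>S\<in>SS. \<forall>v\<in>interior SS S. \<forall>w. F v w \<longrightarrow> w \<in> S)"

text \<open>Branch sets of the contraction: u assigns to each v in V - (U \<union> Us) a neighbour in U.\<close>
definition branch :: "'a set \<Rightarrow> 'a set \<Rightarrow> 'a set \<Rightarrow> ('a \<Rightarrow> 'a) \<Rightarrow> 'a \<Rightarrow> 'a set" where
  "branch V U Us u x = (if x \<in> U then {x} \<union> {v \<in> V - (U \<union> Us). u v = x} else {x})"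

definition contracted_edge ::
  "'a set \<Rightarrow> ('a \<Rightarrow> 'a \<Rightarrow> bool) \<Rightarrow> 'a set \<Rightarrow> 'a set \<Rightarrow> ('a \<Rightarrow> 'a) \<Rightarrow> 'a \<Rightarrow> 'a \<Rightarrow> bool" where
  "contracted_edge V E U Us u x y \<longleftrightarrow> x \<in> U \<union> Us \<and> y \<in> U \<union> Us \<and> x \<noteq> y \<and>
     (\<exists>a\<in>branch V U Us u x. \<exists>b\<in>branch V U Us u y. E a b)"

end

theory Submission
  imports Defs
begin

(* Fix a part S of the division of the contracted graph and put
   D = (U - int S) \<union> (Us \<inter> S).  The whole argument rests on one observation
   (lemma interior_branch_Us_neighbour): if x \<in> U lies in the interior of S,
   then every vertex of Us adjacent in G to the branch set B_x lies in S.
   Indeed, such a neighbour w is either x itself (and x \<in> S), or a vertex of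
   the contracted graph different from x, hence adjacent to x there; since
   interior vertices have all their neighbours inside S, w \<in> S.
   A vertex v of G is then dominated by D as follows: if the vertex of U that
   "represents" v (v itself for v \<in> U, the neighbour u v for v \<notin> U \<union> Us, some
   U-neighbour for v \<in> Us - U) is not interior, it lies in D; otherwise the
   observation puts v or one of its Us-neighbours into Us \<inter> S. *)

lemma division_interior_neighbour:
  assumes "division W F SS" and "S \<in> SS" and "v \<in> interior SS S" and "F v w"
  shows "w \<in> S"
  using assms unfolding division_def by blast

lemma interior_subset: "interior SS S \<subseteq> S"
  unfolding interior_def by blast

lemma branch_self: "x \<in> branch V U Us u x"
  by (simp add: branch_def)

lemma branch_contracted_vertex:
  assumes "v \<in> V - (U \<union> Us)" and "u v \<in> U"
  shows "v \<in> branch V U Us u (u v)"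
  using assms by (simp add: branch_def)

lemma contracted_edgeI:
  assumes "x \<in> U \<union> Us" and "y \<in> U \<union> Us" and "x \<noteq> y"
    and "a \<in> branch V U Us u x" and "b \<in> branch V U Us u y" and "E a b"
  shows "contracted_edge V E U Us u x y"
  using assms unfolding contracted_edge_def by blast

lemma interior_branch_Us_neighbour:
  assumes div: "division (U \<union> Us) (contracted_edge V E U Us u) SS" and S: "S \<in> SS"
    and x: "x \<in> U" "x \<in> interior SS S"
    and a: "a \<in> branch V U Us u x" and w: "w \<in> Us" "E a w"
  shows "w \<in> S"
proof (cases "w = x")
  case True
  have "x \<in> S" by (rule subsetD[OF interior_subset x(2)])
  then show ?thesis using True by simp
next
  case False
  have "x \<in> U \<union> Us" "w \<in> U \<union> Us" "x \<noteq> w" using x(1) w(1) False by auto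
  then have "contracted_edge V E U Us u x w"
    by (rule contracted_edgeI[where E=E, OF _ _ _ a branch_self w(2)])
  then show ?thesis by (rule division_interior_neighbour[OF div S x(2)])
qed

lemma U_vertex_dominated:
  assumes domUs: "dominating V E Us"
    and div: "division (U \<union> Us) (contracted_edge V E U Us u) SS" and S: "S \<in> SS"
    and v: "v \<in> V" "v \<in> U"
  shows "\<exists>w \<in> (U - interior SS S) \<union> (Us \<inter> S). w = v \<or> E v w"
proof (cases "v \<in> interior SS S")
  case True
  have "v \<in> Us \<or> (\<exists>w\<in>Us. E v w)"
    using domUs v unfolding dominating_def by blast
  then show ?thesis
  proof
    assume "v \<in> Us"
    then show ?thesis using subsetD[OF interior_subset True] by (intro bexI[of _ v]) auto
  next
    assume "\<exists>w\<in>Us. E v w"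
    then obtain w where w: "w \<in> Us" "E v w" by blast
    then have "w \<in> S"
      by (rule interior_branch_Us_neighbour[where E=E, OF div S v(2) True branch_self])
    then show ?thesis using w by (intro bexI[of _ w]) auto
  qed
qed (insert v(2), intro bexI[of _ v], auto)

lemma Us_vertex_dominated:
  assumes G: "graph V E" and domU: "dominating V E U"
    and div: "division (U \<union> Us) (contracted_edge V E U Us u) SS" and S: "S \<in> SS"
    and v: "v \<in> V" "v \<in> Us" "v \<notin> U"
  shows "\<exists>w \<in> (U - interior SS S) \<union> (Us \<inter> S). w = v \<or> E v w"
proof -
  obtain w where w: "w \<in> U" "E v w"
    using domU v unfolding dominating_def by blast
  show ?thesis
  proof (cases "w \<in> interior SS S")
    case True
    have "E w v" using G w(2) unfolding graph_def by blast
    then have "v \<in> S"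
      by (rule interior_branch_Us_neighbour[where E=E, OF div S w(1) True branch_self v(2)])
    then show ?thesis using v(2) by (intro bexI[of _ v]) auto
  qed (insert w, intro bexI[of _ w], auto)
qed

lemma contracted_vertex_dominated:
  assumes domUs: "dominating V E Us"
    and choice: "\<forall>v \<in> V - (U \<union> Us). u v \<in> U \<and> E v (u v)"
    and div: "division (U \<union> Us) (contracted_edge V E U Us u) SS" and S: "S \<in> SS"
    and v: "v \<in> V - (U \<union> Us)"
  shows "\<exists>w \<in> (U - interior SS S) \<union> (Us \<inter> S). w = v \<or> E v w"
proof -
  have x: "u v \<in> U" "E v (u v)" using choice v by blast+
  show ?thesis
  proof (cases "u v \<in> interior SS S")
    case True
    obtain w where w: "w \<in> Us" "E v w"
      using domUs v unfolding dominating_def by blast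
    have "v \<in> branch V U Us u (u v)"
      using branch_contracted_vertex[of v V U Us u] v x(1) by blast
    then have "w \<in> S"
      by (rule interior_branch_Us_neighbour[where E=E, OF div S x(1) True _ w])
    then show ?thesis using w by (intro bexI[of _ w]) auto
  qed (insert x, intro bexI[of _ "u v"], auto)
qed

lemma part_dominating:
  assumes G: "graph V E" and domU: "dominating V E U" and domUs: "dominating V E Us"
    and choice: "\<forall>v \<in> V - (U \<union> Us). u v \<in> U \<and> E v (u v)"
    and div: "division (U \<union> Us) (contracted_edge V E U Us u) SS" and S: "S \<in> SS"
  shows "dominating V E ((U - interior SS S) \<union> (Us \<inter> S))"
  unfolding dominating_def
proof (intro conjI ballI)
  show "(U - interior SS S) \<union> (Us \<inter> S) \<subseteq> V"
    using domU domUs unfolding dominating_def by blast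
next
  fix v assume v: "v \<in> V"
  have "\<exists>w \<in> (U - interior SS S) \<union> (Us \<inter> S). w = v \<or> E v w"
  proof -
    consider "v \<in> U" | "v \<in> Us" "v \<notin> U" | "v \<in> V - (U \<union> Us)" using v by blast
    then show ?thesis
    proof cases
      case 1
      then show ?thesis by (rule U_vertex_dominated[OF domUs div S v])
    next
      case 2
      then show ?thesis by (rule Us_vertex_dominated[OF G domU div S v])
    next
      case 3
      then show ?thesis by (rule contracted_vertex_dominated[OF domUs choice div S])
    qed
  qed
  then show "v \<in> (U - interior SS S) \<union> (Us \<inter> S)
      \<or> (\<exists>w \<in> (U - interior SS S) \<union> (Us \<inter> S). E v w)" by blast
qed

theorem mainTheorem7:
  fixes V :: "'a set" and E :: "'a \<Rightarrow> 'a \<Rightarrow> bool" and U Us :: "'a set"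
    and u :: "'a \<Rightarrow> 'a" and SS :: "'a set set"
  assumes "graph V E"
    and "dominating V E U" and "dominating V E Us"
    and "\<forall>v \<in> V - (U \<union> Us). u v \<in> U \<and> E v (u v)"
    and "division (U \<union> Us) (contracted_edge V E U Us u) SS"
  shows "\<forall>S\<in>SS. dominating V E ((U - interior SS S) \<union> (Us \<inter> S))"
  using part_dominating[OF assms] by blast

end
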